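(* Let $\Bbbk$ be a field of characteristic zero, let $n\geq 3$, $d\geq 2$, and $S=\Bbbk[x_1,\ldots,x_n]$. Then for every integer $\mu \in\left[2n-1, \mathrm{HF}(S,d)-\mathrm{HF}(S,d-1)\right]$ there exists an artinian monomial ideal $I$ minimally generated by $\mu$ elements of degree $d$ such that $S/I$ fails the WLP by injectivity in degree $d-1$. Moreover, this interval is non-empty except for the cases $(n,d) \in \{(4,2),(3,3),(3,2)\}$.
   Context: $\mathrm{HF}(A,k)=\dim_\Bbbk A_k$. For a monomial ideal $I$, $A=S/I$ fails the WLP in degree $i$ if $\times(x_1+\cdots+x_n): A_i\to A_{i+1}$ does not have maximal rank; it fails the WLP by injectivity in degree $i$ if in addition $\mathrm{HF}(A,i)\le \mathrm{HF}(A,i+1)$. *)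

theory Defs
  imports Main
begin

text \<open>Monomials of S = k[x_1,...,x_n] are encoded by exponent vectors
  m :: nat \<Rightarrow> nat supported on {0..<n} (variable x_(j+1) has exponent m j).
  A monomial ideal is given by a finite set G of monomial generators.\<close>

type_synonym monom = "nat \<Rightarrow> nat"

definition Mon :: "nat \<Rightarrow> monom set" where
  "Mon n = {m. \<forall>j\<ge>n. m j = 0}"

definition mdeg :: "nat \<Rightarrow> monom \<Rightarrow> nat" where
  "mdeg n m = (\<Sum>j<n. m j)"

definition mdvd :: "monom \<Rightarrow> monom \<Rightarrow> bool" where
  "mdvd g m \<longleftrightarrow> (\<forall>j. g j \<le> m j)"

definition in_ideal :: "monom set \<Rightarrow> monom \<Rightarrow> bool" where
  "in_ideal G m \<longleftrightarrow> (\<exists>g\<in>G. mdvd g m)"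

definition HF_S :: "nat \<Rightarrow> nat \<Rightarrow> nat" where
  "HF_S n i = card {m \<in> Mon n. mdeg n m = i}"

text \<open>Standard monomials of degree i: a k-basis of (S/I)_i\<close>
definition Std :: "nat \<Rightarrow> monom set \<Rightarrow> nat \<Rightarrow> monom set" where
  "Std n G i = {m \<in> Mon n. mdeg n m = i \<and> \<not> in_ideal G m}"

definition HF :: "nat \<Rightarrow> monom set \<Rightarrow> nat \<Rightarrow> nat" where
  "HF n G i = card (Std n G i)"

definition minimal_gens :: "monom set \<Rightarrow> bool" where
  "minimal_gens G \<longleftrightarrow> (\<forall>g\<in>G. \<forall>h\<in>G. mdvd g h \<longrightarrow> g = h)"

text \<open>S/I artinian: S/I is finite-dimensional, i.e. finitely many standard monomials\<close>
definition artinian :: "nat \<Rightarrow> monom set \<Rightarrow> bool" where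
  "artinian n G \<longleftrightarrow> finite {m \<in> Mon n. \<not> in_ideal G m}"

text \<open>The k-vector space (S/I)_i, realized as coefficient functions supported on Std n G i\<close>
definition Aspace :: "'k::field itself \<Rightarrow> nat \<Rightarrow> monom set \<Rightarrow> nat \<Rightarrow> (monom \<Rightarrow> 'k) set" where
  "Aspace _ n G i = {c. \<forall>m. m \<notin> Std n G i \<longrightarrow> c m = 0}"

text \<open>multiplication by x_1 + ... + x_n : (S/I)_i \<rightarrow> (S/I)_(i+1)\<close>
definition mult_ell :: "nat \<Rightarrow> monom set \<Rightarrow> nat \<Rightarrow> (monom \<Rightarrow> 'k::field) \<Rightarrow> (monom \<Rightarrow> 'k)" where
  "mult_ell n G i c = (\<lambda>m'. if m' \<in> Std n G (Suc i)
      then (\<Sum>j<n. if 0 < m' j then c (m'(j := m' j - 1)) else 0) else 0)"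

definition max_rank :: "'k::field itself \<Rightarrow> nat \<Rightarrow> monom set \<Rightarrow> nat \<Rightarrow> bool" where
  "max_rank K n G i \<longleftrightarrow>
     inj_on (mult_ell n G i) (Aspace K n G i) \<or>
     mult_ell n G i ` Aspace K n G i = Aspace K n G (Suc i)"

definition fails_WLP_inj :: "'k::field itself \<Rightarrow> nat \<Rightarrow> monom set \<Rightarrow> nat \<Rightarrow> bool" where
  "fails_WLP_inj K n G i \<longleftrightarrow> \<not> max_rank K n G i \<and> HF n G i \<le> HF n G (Suc i)"

end

theory Submission
  imports Defs "HOL-Library.Function_Algebras" "HOL.Vector_Spaces"
begin

(* Let I be generated by x_1^d, ..., x_n^d, by x_1^(d-1) x_j for all j (2n-1 monomials,
   x_1 having exponent index 0), and by further degree-d monomials up to mu generators.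
   Then x_1^(d-1) is a nonzero element of (S/I)_(d-1) killed by every variable, so
   multiplication by x_1 + ... + x_n is not injective in degree d-1.  As I has no generators
   below degree d, HF(S/I,d-1) = HF(S,d-1) <= HF(S,d) - mu = HF(S/I,d), and a linear map with
   nonzero kernel into a space of at least the same dimension is not surjective either.
   Finally HF(S,d) - HF(S,d-1) = C(n+d-2, d), which is at least 2n-1 except in the three
   listed cases. *)

section \<open>Coefficient vectors\<close>

definition fun_scale :: "'k::field \<Rightarrow> ('a \<Rightarrow> 'k) \<Rightarrow> ('a \<Rightarrow> 'k)" where
  "fun_scale a f = (\<lambda>x. a * f x)"

interpretation fun_space: vector_space "fun_scale :: 'k::field \<Rightarrow> ('a \<Rightarrow> 'k) \<Rightarrow> _"
  by unfold_locales (auto simp: fun_scale_def fun_eq_iff algebra_simps)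

definition kdelta :: "'a \<Rightarrow> 'a \<Rightarrow> 'k::zero_neq_one" where
  "kdelta a = (\<lambda>x. if x = a then 1 else 0)"

definition supported_on :: "'a set \<Rightarrow> ('a \<Rightarrow> 'k::zero) set" where
  "supported_on X = {c. \<forall>x. x \<notin> X \<longrightarrow> c x = 0}"

lemma kdelta_apply_eq_iff [simp]: "kdelta a x = (1 :: 'k::zero_neq_one) \<longleftrightarrow> x = a"
  by (simp add: kdelta_def)

lemma inj_kdelta: "inj (kdelta :: 'a \<Rightarrow> 'a \<Rightarrow> 'k::zero_neq_one)"
  by (rule injI) (metis kdelta_apply_eq_iff)

lemma kdelta_in_supported_on: "a \<in> X \<Longrightarrow> kdelta a \<in> supported_on X"
  by (simp add: supported_on_def kdelta_def)

lemma sum_fun_apply: "(\<Sum>v\<in>T. f v) x = (\<Sum>v\<in>T. f v x)"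
  by (induction T rule: infinite_finite_induct) auto

lemma supported_on_subset_span_kdelta:
  assumes "finite X"
  shows "supported_on X \<subseteq> fun_space.span (kdelta ` X :: ('a \<Rightarrow> 'k::field) set)"
proof
  fix c :: "'a \<Rightarrow> 'k" assume c: "c \<in> supported_on X"
  have "c = (\<Sum>a\<in>X. fun_scale (c a) (kdelta a))"
  proof
    fix x
    show "c x = (\<Sum>a\<in>X. fun_scale (c a) (kdelta a)) x"
      using c assms by (cases "x \<in> X")
        (auto simp: sum_fun_apply fun_scale_def kdelta_def supported_on_def if_distrib[of "(*) _"]
          cong: if_cong)
  qed
  also have "\<dots> \<in> fun_space.span (kdelta ` X)"
    by (intro fun_space.span_sum fun_space.span_scale fun_space.span_base) auto
  finally show "c \<in> fun_space.span (kdelta ` X)" .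
qed

lemma independent_kdelta: "fun_space.independent (kdelta ` X :: ('a \<Rightarrow> 'k::field) set)"
  unfolding fun_space.independent_explicit_module
proof (intro allI impI)
  fix T u and v :: "'a \<Rightarrow> 'k"
  assume T: "finite T" "T \<subseteq> kdelta ` X" "(\<Sum>w\<in>T. fun_scale (u w) w) = 0" "v \<in> T"
  then obtain a where a: "v = kdelta a" by auto
  have "u w * w a = (if w = v then u w else 0)" if w: "w \<in> T" for w
  proof -
    obtain b where "w = kdelta b" using w T(2) by auto
    then show ?thesis using a by (cases "b = a") (auto simp: kdelta_def fun_eq_iff)
  qed
  then have "(\<Sum>w\<in>T. fun_scale (u w) w) a = (\<Sum>w\<in>T. if w = v then u w else 0)"
    unfolding sum_fun_apply fun_scale_def by (rule sum.cong[OF refl])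
  also have "\<dots> = u v" using T(1,4) by simp
  finally show "u v = 0" using T(3) by simp
qed

lemma linear_image_supported_on_ne:
  fixes L :: "('a \<Rightarrow> 'k::field) \<Rightarrow> ('b \<Rightarrow> 'k)"
  assumes L: "Vector_Spaces.linear fun_scale fun_scale L" and A: "finite A" "a \<in> A"
    and kernel: "L (kdelta a) = 0" and card: "card A \<le> card B"
  shows "L ` supported_on A \<noteq> supported_on B"
proof
  assume onto: "L ` supported_on A = supported_on B"
  let ?V = "L ` kdelta ` (A - {a})"
  have "L ` supported_on A \<subseteq> L ` fun_space.span (kdelta ` A)"
    using supported_on_subset_span_kdelta[OF A(1)] by (rule image_mono)
  also have "\<dots> = fun_space.span (L ` kdelta ` A)"
    using module_hom.span_image[OF module_hom_iff_linear[THEN iffD2, OF L]] by simp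
  also have "\<dots> \<subseteq> fun_space.span ?V"
  proof -
    have "L ` kdelta ` A \<subseteq> insert 0 ?V" using kernel by auto
    then show ?thesis by (metis fun_space.span_insert_0 fun_space.span_mono)
  qed
  finally have "supported_on B \<subseteq> fun_space.span ?V" by (simp only: onto)
  with image_subsetI[of B kdelta, OF kdelta_in_supported_on]
  have "kdelta ` B \<subseteq> fun_space.span ?V" by (rule subset_trans)
  with fun_space.independent_span_bound[OF _ independent_kdelta]
  have "card (kdelta ` B :: ('b \<Rightarrow> 'k) set) \<le> card ?V"
    using A(1) by (meson finite_Diff finite_imageI)
  also have "\<dots> \<le> card (kdelta ` (A - {a}) :: ('a \<Rightarrow> 'k) set)"
    using A(1) by (simp add: card_image_le)
  also have "\<dots> \<le> card (A - {a})" using A(1) by (simp add: card_image_le)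
  finally have "card B \<le> card A - 1"
    using A by (simp add: card_image inj_on_subset[OF inj_kdelta])
  moreover have "card A > 0" using A card_gt_0_iff by blast
  ultimately show False using card by linarith
qed

section \<open>Monomials and the Hilbert function of S\<close>

definition var_pow :: "nat \<Rightarrow> nat \<Rightarrow> monom" where
  "var_pow j e = (\<lambda>i. if i = j then e else 0)"

lemma var_pow_in_Mon: "j < n \<Longrightarrow> var_pow j e \<in> Mon n"
  by (simp add: Mon_def var_pow_def)

lemma mdeg_var_pow: "j < n \<Longrightarrow> mdeg n (var_pow j e) = e"
  by (simp add: mdeg_def var_pow_def)

lemma mdeg_add: "mdeg n (m + m') = mdeg n m + mdeg n m'"
  by (simp add: mdeg_def sum.distrib)

lemma mdvd_trans: "mdvd f g \<Longrightarrow> mdvd g h \<Longrightarrow> mdvd f h"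
  unfolding mdvd_def using order_trans by blast

lemma mdeg_le_if_mdvd: "mdvd g m \<Longrightarrow> mdeg n g \<le> mdeg n m"
  unfolding mdvd_def mdeg_def by (intro sum_mono) auto

lemma mdvd_mdeg_eq_imp_eq:
  assumes "g \<in> Mon n" "m \<in> Mon n" "mdvd g m" "mdeg n g = mdeg n m"
  shows "g = m"
proof
  fix j
  show "g j = m j"
  proof (cases "j < n")
    case True
    have "sum g {..<n} = sum m {..<n}" using assms(4) by (simp add: mdeg_def)
    moreover have "\<forall>i\<in>{..<n}. g i \<le> m i" using assms(3) by (simp add: mdvd_def)
    ultimately show ?thesis using True by (metis finite_lessThan lessThan_iff sum_mono_inv)
  next
    case False
    then show ?thesis using assms(1,2) by (simp add: Mon_def)
  qed
qed

lemma finite_Mon_bounded: "finite {m \<in> Mon n. \<forall>j. m j \<le> b}"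
proof (rule finite_subset)
  show "{m \<in> Mon n. \<forall>j. m j \<le> b} \<subseteq> {f. \<forall>x. (x \<in> {..<n} \<longrightarrow> f x \<in> {..b}) \<and> (x \<notin> {..<n} \<longrightarrow> f x = 0)}"
    by (auto simp: Mon_def)
  show "finite {f. \<forall>x. (x \<in> {..<n} \<longrightarrow> f x \<in> {..b}) \<and> (x \<notin> {..<n} \<longrightarrow> f x = (0::nat))}"
    by (rule finite_set_of_finite_funs) auto
qed

lemma finite_Mon_mdeg: "finite {m \<in> Mon n. mdeg n m = i}"
proof -
  have "m j \<le> i" if "m \<in> Mon n" "mdeg n m = i" for m j
    using that by (cases "j < n") (auto simp: mdeg_def Mon_def intro: member_le_sum)
  then show ?thesis by (intro finite_subset[OF _ finite_Mon_bounded[of n i]]) auto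
qed

lemma finite_Std: "finite (Std n G i)"
  using finite_Mon_mdeg[of n i] by (rule rev_finite_subset) (auto simp: Std_def)

lemma HF_S_eq_choose: "HF_S n d = (d + n - 1) choose d"
proof -
  let ?D = "{m \<in> Mon n. mdeg n m = d}"
  let ?L = "{l::nat list. size l = n \<and> sum_list l = d}"
  let ?of_list = "\<lambda>l j. if j < n then l ! j else 0"
  have sum_list_map: "sum_list (map m [0..<n]) = mdeg n m" for m
    by (simp add: mdeg_def sum_list_sum_nth atLeast0LessThan)
  have "bij_betw (\<lambda>m. map m [0..<n]) ?D ?L"
  proof (rule bij_betw_byWitness[where f' = ?of_list])
    show "\<forall>m\<in>?D. ?of_list (map m [0..<n]) = m"
      by (auto simp: Mon_def fun_eq_iff)
    show "\<forall>l\<in>?L. map (?of_list l) [0..<n] = l"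
      by (auto simp: list_eq_iff_nth_eq)
    show "(\<lambda>m. map m [0..<n]) ` ?D \<subseteq> ?L"
      by (auto simp: sum_list_map)
    show "?of_list ` ?L \<subseteq> ?D"
    proof (rule image_subsetI)
      fix l assume "l \<in> ?L"
      then have l: "length l = n" "sum_list l = d" by auto
      then have "map (?of_list l) [0..<n] = l" by (auto simp: list_eq_iff_nth_eq)
      then show "?of_list l \<in> ?D" using l sum_list_map[of "?of_list l"] by (auto simp: Mon_def)
    qed
  qed
  then have "card ?D = card ?L" by (rule bij_betw_same_card)
  then show ?thesis unfolding HF_S_def by (simp add: card_length_sum_list)
qed

lemma HF_S_pascal:
  assumes "n \<ge> 1" "d \<ge> 1"
  shows "HF_S n d = HF_S n (d - 1) + ((d + n - 2) choose d)"
proof -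
  obtain k where d: "d = Suc k" using assms(2) by (cases d) auto
  have "k + n = Suc (k + n - 1)" using assms(1) by simp
  then have "(k + n) choose Suc k = ((k + n - 1) choose k) + ((k + n - 1) choose Suc k)"
    by (metis binomial_Suc_Suc)
  then show ?thesis by (simp add: HF_S_eq_choose d)
qed

lemma choose_mono: "d \<le> d' \<Longrightarrow> (m + d) choose d \<le> (m + d') choose d'"
  by (rule lift_Suc_mono_le[of "\<lambda>d. (m + d) choose d"]) simp_all

lemma two_mul_minus_one_le_choose_iff:
  assumes "n \<ge> 3" "d \<ge> 2"
  shows "2 * n - 1 \<le> (d + n - 2) choose d \<longleftrightarrow> (n, d) \<notin> {(4, 2), (3, 3), (3, 2)}"
proof -
  have shift: "d + n - 2 = (n - 2) + d" using assms(1) by simp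
  consider "n = 3" | "n = 4" | "n \<ge> 5" using assms(1) by linarith
  then show ?thesis
  proof cases
    case 1
    then show ?thesis using assms(2) by (auto simp: shift)
  next
    case 2
    show ?thesis
    proof (cases "d = 2")
      case True
      then show ?thesis using 2 by (simp add: numeral_eq_Suc)
    next
      case False
      have "(10::nat) = (2 + 3) choose 3" by (simp add: numeral_eq_Suc)
      also have "\<dots> \<le> (2 + d) choose d" using False assms(2) by (intro choose_mono) simp
      finally show ?thesis using 2 False by (simp add: shift)
    qed
  next
    case 3
    have "2 * n - 1 \<le> n * (n - 1) div 2"
    proof -
      have "n * 4 \<le> n * (n - 1)" using 3 by (intro mult_le_mono2) linarith
      then show ?thesis by linarith
    qed
    also have "\<dots> = n choose 2" by (simp add: choose_two)
    also have "\<dots> = (n - 2 + 2) choose 2" using 3 by (simp only: le_add_diff_inverse2)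
    also have "\<dots> \<le> (n - 2 + d) choose d" using assms(2) by (rule choose_mono)
    finally show ?thesis using 3 by (simp add: shift)
  qed
qed

section \<open>Socle elements obstruct the WLP\<close>

lemma in_ideal_if_mem: "g \<in> G \<Longrightarrow> in_ideal G g"
  by (auto simp: in_ideal_def mdvd_def)

lemma Aspace_eq_supported_on: "Aspace K n G i = supported_on (Std n G i)"
  by (simp add: Aspace_def supported_on_def)

lemma mult_ell_linear:
  "Vector_Spaces.linear fun_scale fun_scale (mult_ell n G i :: (monom \<Rightarrow> 'k::field) \<Rightarrow> _)"
  unfolding linear_iff
proof (intro conjI allI)
  show "vector_space (fun_scale :: 'k \<Rightarrow> _)" "vector_space (fun_scale :: 'k \<Rightarrow> _)"
    by (fact fun_space.vector_space_axioms)+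
  show "mult_ell n G i (x + y) = mult_ell n G i x + mult_ell n G i y" for x y :: "monom \<Rightarrow> 'k"
    by (auto simp: mult_ell_def fun_eq_iff sum.distrib[symmetric] intro!: sum.cong)
  show "mult_ell n G i (fun_scale c x) = fun_scale c (mult_ell n G i x)" for c and x :: "monom \<Rightarrow> 'k"
    by (auto simp: mult_ell_def fun_scale_def fun_eq_iff sum_distrib_left intro!: sum.cong)
qed

lemma eq_add_var_pow_if_decrement_eq:
  assumes "0 < m' j" "m'(j := m' j - 1) = m"
  shows "m' = m + var_pow j 1"
  unfolding assms(2)[symmetric] using assms(1) by (auto simp: fun_eq_iff var_pow_def)

lemma mult_ell_kdelta_eq_0:
  assumes "\<forall>j<n. in_ideal G (m + var_pow j 1)"
  shows "mult_ell n G i (kdelta m :: monom \<Rightarrow> 'k::field) = 0"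
proof
  fix m'
  have "(if 0 < m' j then kdelta m (m'(j := m' j - 1)) else 0) = (0 :: 'k)"
    if m': "m' \<in> Std n G (Suc i)" and j: "j < n" for j
  proof (rule ccontr)
    assume "(if 0 < m' j then kdelta m (m'(j := m' j - 1)) else 0) \<noteq> (0 :: 'k)"
    then have "0 < m' j" "m'(j := m' j - 1) = m" by (auto simp: kdelta_def split: if_splits)
    then have "m' = m + var_pow j 1" by (rule eq_add_var_pow_if_decrement_eq)
    then have "in_ideal G m'" using assms j by simp
    then show False using m' by (simp add: Std_def)
  qed
  then show "mult_ell n G i (kdelta m) m' = (0 :: monom \<Rightarrow> 'k) m'"
    by (simp add: mult_ell_def)
qed

lemma fails_WLP_inj_if_socle:
  assumes m: "m \<in> Std n G i" and socle: "\<forall>j<n. in_ideal G (m + var_pow j 1)"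
    and HF: "HF n G i \<le> HF n G (Suc i)"
  shows "fails_WLP_inj (K :: 'k::field itself) n G i"
proof -
  let ?L = "mult_ell n G i :: (monom \<Rightarrow> 'k) \<Rightarrow> _"
  have kernel: "?L (kdelta m) = 0" using socle by (rule mult_ell_kdelta_eq_0)
  have "\<not> inj_on ?L (Aspace K n G i)"
  proof
    assume "inj_on ?L (Aspace K n G i)"
    moreover have "kdelta m \<in> Aspace K n G i"
      using m by (simp add: Aspace_eq_supported_on kdelta_in_supported_on)
    moreover have "0 \<in> Aspace K n G i" by (simp add: Aspace_def)
    moreover have "?L 0 = 0" by (simp add: mult_ell_def fun_eq_iff zero_fun_def)
    ultimately have "kdelta m = (0 :: monom \<Rightarrow> 'k)" using kernel by (metis inj_onD)
    then show False by (metis kdelta_apply_eq_iff zero_fun_apply zero_neq_one)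
  qed
  moreover have "?L ` Aspace K n G i \<noteq> Aspace K n G (Suc i)"
    unfolding Aspace_eq_supported_on
    using mult_ell_linear finite_Std m kernel HF[unfolded HF_def]
    by (rule linear_image_supported_on_ne)
  ultimately show ?thesis using HF unfolding fails_WLP_inj_def max_rank_def by blast
qed

section \<open>Equigenerated monomial ideals\<close>

lemma minimal_gens_if_same_degree:
  assumes "G \<subseteq> Mon n" "\<forall>g\<in>G. mdeg n g = d"
  shows "minimal_gens G"
  using assms mdvd_mdeg_eq_imp_eq unfolding minimal_gens_def by (metis subsetD)

lemma Std_eq_if_below_degree:
  assumes "\<forall>g\<in>G. mdeg n g = d" "i < d"
  shows "Std n G i = {m \<in> Mon n. mdeg n m = i}"
proof -
  have "\<not> in_ideal G m" if "mdeg n m = i" for m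
    using assms mdeg_le_if_mdvd[of _ m n] that unfolding in_ideal_def by fastforce
  then show ?thesis by (auto simp: Std_def)
qed

lemma Std_eq_at_degree:
  assumes "G \<subseteq> {m \<in> Mon n. mdeg n m = d}"
  shows "Std n G d = {m \<in> Mon n. mdeg n m = d} - G"
  using assms mdvd_mdeg_eq_imp_eq in_ideal_if_mem unfolding Std_def in_ideal_def by blast

lemma artinian_if_pure_powers:
  assumes "\<forall>j<n. in_ideal G (var_pow j d)"
  shows "artinian n G"
proof -
  have "m j \<le> d" if m: "m \<in> Mon n" "\<not> in_ideal G m" for m j
  proof (rule ccontr)
    assume big: "\<not> m j \<le> d"
    have "j < n"
    proof (rule ccontr)
      assume "\<not> j < n"
      then have "m j = 0" using m(1) by (simp add: Mon_def)
      then show False using big by simp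
    qed
    then have "in_ideal G (var_pow j d)" using assms by blast
    moreover have "mdvd (var_pow j d) m" using big by (simp add: mdvd_def var_pow_def)
    ultimately have "in_ideal G m" using mdvd_trans unfolding in_ideal_def by blast
    with m(2) show False by contradiction
  qed
  then show ?thesis
    unfolding artinian_def by (intro finite_subset[OF _ finite_Mon_bounded[of n d]]) auto
qed

definition base_gens :: "nat \<Rightarrow> nat \<Rightarrow> monom set" where
  "base_gens n d = (\<lambda>j. var_pow j d) ` {..<n} \<union> (\<lambda>j. var_pow 0 (d - 1) + var_pow j 1) ` {..<n}"

lemma base_gens_subset_Mon_mdeg:
  assumes "n \<ge> 1" "d \<ge> 1"
  shows "base_gens n d \<subseteq> {m \<in> Mon n. mdeg n m = d}"
proof -
  have "var_pow 0 (d - 1) + var_pow j 1 \<in> Mon n" if "j < n" for j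
    using that by (simp add: Mon_def var_pow_def)
  then show ?thesis
    using assms by (auto simp: base_gens_def var_pow_in_Mon mdeg_var_pow mdeg_add)
qed

lemma card_base_gens:
  assumes "n \<ge> 1" "d \<ge> 2"
  shows "card (base_gens n d) = 2 * n - 1"
proof -
  let ?P = "(\<lambda>j. var_pow j d) ` {..<n}" and ?Q = "(\<lambda>j. var_pow 0 (d - 1) + var_pow j 1) ` {..<n}"
  have "inj_on (\<lambda>j. var_pow j d) {..<n}"
    using assms(2) by (intro inj_onI) (metis var_pow_def not_numeral_le_zero)
  then have P: "card ?P = n" by (simp add: card_image)
  have "inj_on (\<lambda>j. var_pow 0 (d - 1) + var_pow j 1) {..<n}"
    by (intro inj_onI) (metis add_left_cancel plus_fun_apply var_pow_def zero_neq_one)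
  then have Q: "card ?Q = n" by (simp add: card_image)
  have "?P \<inter> ?Q = {var_pow 0 d}"
  proof
    show "?P \<inter> ?Q \<subseteq> {var_pow 0 d}"
    proof clarify
      fix j k assume eq: "var_pow j d = var_pow 0 (d - 1) + var_pow k 1"
      then have "var_pow j d 0 = d - 1 + var_pow k 1 0" by (simp add: var_pow_def)
      then have "j = 0" "k = 0" using assms(2) by (auto simp: var_pow_def split: if_splits)
      then show "var_pow j d = var_pow 0 d" by simp
    qed
    have "var_pow 0 d \<in> ?P" using assms(1) by simp
    moreover have "var_pow 0 d = var_pow 0 (d - 1) + var_pow 0 1"
      using assms(2) by (auto simp: var_pow_def fun_eq_iff)
    then have "var_pow 0 d \<in> ?Q" using assms(1) by (intro image_eqI[where x = 0]) auto
    ultimately show "{var_pow 0 d} \<subseteq> ?P \<inter> ?Q" by simp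
  qed
  moreover have "card ?P + card ?Q = card (?P \<union> ?Q) + card (?P \<inter> ?Q)"
    by (rule card_Un_Int) auto
  ultimately show ?thesis using P Q by (simp add: base_gens_def)
qed

lemma fails_WLP_inj_if_base_gens_subset:
  assumes n: "n \<ge> 1" and d: "d \<ge> 2"
    and G: "base_gens n d \<subseteq> G" "G \<subseteq> {m \<in> Mon n. mdeg n m = d}"
    and HF_S: "HF_S n (d - 1) + card G \<le> HF_S n d"
  shows "fails_WLP_inj K n G (d - 1)"
proof (rule fails_WLP_inj_if_socle)
  have Std_below: "Std n G (d - 1) = {m \<in> Mon n. mdeg n m = d - 1}"
    using G(2) d by (intro Std_eq_if_below_degree) auto
  show "var_pow 0 (d - 1) \<in> Std n G (d - 1)"
    unfolding Std_below using n by (simp add: var_pow_in_Mon mdeg_var_pow)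
  show "\<forall>j<n. in_ideal G (var_pow 0 (d - 1) + var_pow j 1)"
    using G(1) in_ideal_if_mem unfolding base_gens_def by blast
  have "finite G" using G(2) finite_Mon_mdeg by (rule finite_subset)
  have "HF n G d = card ({m \<in> Mon n. mdeg n m = d} - G)"
    unfolding HF_def Std_eq_at_degree[OF G(2)] ..
  also have "\<dots> = HF_S n d - card G"
    unfolding HF_S_def using \<open>finite G\<close> G(2) by (rule card_Diff_subset)
  finally have "HF n G d = HF_S n d - card G" .
  moreover have "HF n G (d - 1) = HF_S n (d - 1)" unfolding HF_def HF_S_def Std_below ..
  ultimately show "HF n G (d - 1) \<le> HF n G (Suc (d - 1))" using HF_S d by simp
qed

lemma exists_gens_fails_WLP_inj:
  assumes "n \<ge> 1" "d \<ge> 2" "2 * n - 1 \<le> \<mu>" "HF_S n (d - 1) + \<mu> \<le> HF_S n d"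
  shows "\<exists>G. G \<subseteq> Mon n \<and> finite G \<and> card G = \<mu> \<and> (\<forall>g\<in>G. mdeg n g = d) \<and>
      minimal_gens G \<and> artinian n G \<and> fails_WLP_inj K n G (d - 1)"
proof -
  let ?D = "{m \<in> Mon n. mdeg n m = d}"
  have "card (base_gens n d) \<le> \<mu>" using assms card_base_gens by simp
  moreover have "\<mu> \<le> card ?D" using assms(4) unfolding HF_S_def by linarith
  moreover have "base_gens n d \<subseteq> ?D" using assms by (intro base_gens_subset_Mon_mdeg) auto
  ultimately have "\<exists>G. base_gens n d \<subseteq> G \<and> G \<subseteq> ?D \<and> card G = \<mu>"
    using finite_Mon_mdeg by (rule exists_subset_between)
  then obtain G where G: "base_gens n d \<subseteq> G" "G \<subseteq> ?D" "card G = \<mu>" by blast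
  have "finite G" "G \<subseteq> Mon n" "\<forall>g\<in>G. mdeg n g = d"
    using G(2) finite_subset[OF G(2) finite_Mon_mdeg] by auto
  moreover have "minimal_gens G" using calculation(2,3) by (rule minimal_gens_if_same_degree)
  moreover have "artinian n G"
    using G(1) in_ideal_if_mem unfolding base_gens_def by (intro artinian_if_pure_powers) blast
  moreover have "fails_WLP_inj K n G (d - 1)"
    using assms G by (intro fails_WLP_inj_if_base_gens_subset) auto
  ultimately show ?thesis using G(3) by blast
qed

theorem corollary4p4:
  fixes n d :: nat
  assumes "n \<ge> 3" and "d \<ge> 2"
  shows "(\<forall>\<mu>::nat. 2 * n - 1 \<le> \<mu> \<and> int \<mu> \<le> int (HF_S n d) - int (HF_S n (d - 1)) \<longrightarrow>
            (\<exists>G. G \<subseteq> Mon n \<and> finite G \<and> card G = \<mu> \<and> (\<forall>g\<in>G. mdeg n g = d) \<and>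
                 minimal_gens G \<and> artinian n G \<and>
                 fails_WLP_inj TYPE('k::field_char_0) n G (d - 1)))
       \<and> (int (2 * n - 1) \<le> int (HF_S n d) - int (HF_S n (d - 1)) \<longleftrightarrow>
            (n, d) \<notin> {(4, 2), (3, 3), (3, 2)})"
proof (intro conjI allI impI)
  fix \<mu> :: nat
  assume "2 * n - 1 \<le> \<mu> \<and> int \<mu> \<le> int (HF_S n d) - int (HF_S n (d - 1))"
  then have "2 * n - 1 \<le> \<mu>" "HF_S n (d - 1) + \<mu> \<le> HF_S n d" by linarith+
  then show "\<exists>G. G \<subseteq> Mon n \<and> finite G \<and> card G = \<mu> \<and> (\<forall>g\<in>G. mdeg n g = d) \<and>
      minimal_gens G \<and> artinian n G \<and> fails_WLP_inj TYPE('k::field_char_0) n G (d - 1)"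
    using assms by (intro exists_gens_fails_WLP_inj) auto
next
  have "HF_S n d = HF_S n (d - 1) + ((d + n - 2) choose d)"
    using assms by (intro HF_S_pascal) auto
  then have diff: "int (HF_S n d) - int (HF_S n (d - 1)) = int ((d + n - 2) choose d)" by simp
  show "int (2 * n - 1) \<le> int (HF_S n d) - int (HF_S n (d - 1)) \<longleftrightarrow>
      (n, d) \<notin> {(4, 2), (3, 3), (3, 2)}"
    unfolding diff of_nat_le_iff by (rule two_mul_minus_one_le_choose_iff[OF assms])
qed

end
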